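(* Let $a>0$. The map $\Lambda_a$ maps $\mathcal D[0,\infty)$ into $\mathcal D[0,\infty)$, $\mathcal C[0,\infty)$ into $\mathcal C[0,\infty)$, $\mathcal{BV}[0,\infty)$ into $\mathcal{BV}[0,\infty)$, and absolutely continuous functions (on every compact interval) to absolutely continuous functions.
   Context: $\mathcal D[0,\infty)$ is the space of right-continuous functions $[0,\infty)\to\mathbb R$ with left limits; $\mathcal C[0,\infty)$ and $\mathcal{BV}[0,\infty)$ are its subsets of continuous functions and of functions of bounded variation on every compact interval. Notation: $x^+=\max(x,0)$, $x\wedge y=\min(x,y)$. For $a>0$ and a function $\phi:[0,\infty)\to\mathbb R$, $\Lambda_a(\phi)(t)=\phi(t)-\sup_{s\in[0,t]}\big[(\phi(s)-a)^+\wedge\inf_{u\in[s,t]}\phi(u)\big]$. *)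

theory Defs
  imports "HOL-Analysis.Analysis"
begin

text \<open>Functions on [0,\<infinity>) are modelled as real \<Rightarrow> real; only values on {0..} matter.\<close>

definition cadlag :: "(real \<Rightarrow> real) \<Rightarrow> bool" where
  "cadlag f \<longleftrightarrow> (\<forall>t\<ge>0. continuous (at_right t) f) \<and>
                 (\<forall>t>0. \<exists>l. (f \<longlongrightarrow> l) (at_left t))"

definition D_space :: "(real \<Rightarrow> real) set" where
  "D_space = {f. cadlag f}"

definition C_space :: "(real \<Rightarrow> real) set" where
  "C_space = {f. cadlag f \<and> continuous_on {0..} f}"

definition bounded_variation_on :: "real \<Rightarrow> real \<Rightarrow> (real \<Rightarrow> real) \<Rightarrow> bool" where
  "bounded_variation_on a b f \<longleftrightarrow>
     (\<exists>M. \<forall>(n::nat) (x::nat \<Rightarrow> real).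
        (a \<le> x 0 \<and> x n \<le> b \<and> (\<forall>i<n. x i \<le> x (Suc i))) \<longrightarrow>
        (\<Sum>i<n. \<bar>f (x (Suc i)) - f (x i)\<bar>) \<le> M)"

definition BV_space :: "(real \<Rightarrow> real) set" where
  "BV_space = {f. cadlag f \<and> (\<forall>T\<ge>0. bounded_variation_on 0 T f)}"

definition abs_continuous_on :: "real \<Rightarrow> real \<Rightarrow> (real \<Rightarrow> real) \<Rightarrow> bool" where
  "abs_continuous_on a b f \<longleftrightarrow>
     (\<forall>\<epsilon>>0. \<exists>\<delta>>0. \<forall>(n::nat) (u::nat \<Rightarrow> real) (v::nat \<Rightarrow> real).
        ((\<forall>i<n. a \<le> u i \<and> u i \<le> v i \<and> v i \<le> b) \<and>
         (\<forall>i j. i < j \<and> j < n \<longrightarrow> v i \<le> u j) \<and>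
         (\<Sum>i<n. v i - u i) < \<delta>) \<longrightarrow>
        (\<Sum>i<n. \<bar>f (v i) - f (u i)\<bar>) < \<epsilon>)"

definition AC_space :: "(real \<Rightarrow> real) set" where
  "AC_space = {f. \<forall>T\<ge>0. abs_continuous_on 0 T f}"

definition Lambda :: "real \<Rightarrow> (real \<Rightarrow> real) \<Rightarrow> real \<Rightarrow> real" where
  "Lambda a \<phi> t = \<phi> t -
     (SUP s\<in>{0..t}. min (max (\<phi> s - a) 0) (INF u\<in>{s..t}. \<phi> u))"

end

theory Submission
  imports Defs
begin

(* Lambda_a phi = phi - psi with the regulator
     psi(t) = sup_{s <= t} min((phi s - a)^+, inf_{[s,t]} phi)      (Lambda_regulator below).
   The key estimate is that psi is stable: if phi stays within B of phi(t) on [t, t'], then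
   |psi(t') - psi(t)| <= B.  Hence increments of Lambda_a phi are controlled by the oscillation
   of phi, which directly yields right continuity, left limits and continuity.  For bounded
   variation and absolute continuity choose in each interval [t, t'] a point w at which
   |phi w - phi t| nearly attains that oscillation: the increments of Lambda_a phi are then
   bounded by those of phi over the intervals [t, t'] and [t, w], and the latter refine the
   partition, resp. form a shorter family of nonoverlapping intervals.  All infima make sense
   because cadlag and absolutely continuous functions are bounded below on compact intervals. *)

definition Lambda_regulator :: "real \<Rightarrow> (real \<Rightarrow> real) \<Rightarrow> real \<Rightarrow> real" where
  "Lambda_regulator a \<phi> t = (SUP s\<in>{0..t}. min (max (\<phi> s - a) 0) (INF u\<in>{s..t}. \<phi> u))"

lemma Lambda_eq: "Lambda a \<phi> t = \<phi> t - Lambda_regulator a \<phi> t"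
  by (simp add: Lambda_def Lambda_regulator_def)

lemma INF_Icc_le:
  fixes \<phi> :: "real \<Rightarrow> real"
  assumes "bdd_below (\<phi> ` {0..r})" and "0 \<le> s" and "u \<in> {s..r}"
  shows "(INF v\<in>{s..r}. \<phi> v) \<le> \<phi> u"
  using assms by (intro cINF_lower) (auto elim!: bdd_below_mono)

lemma Lambda_regulator_ge:
  fixes \<phi> :: "real \<Rightarrow> real"
  assumes "bdd_below (\<phi> ` {0..r})" and "s \<in> {0..r}"
  shows "min (max (\<phi> s - a) 0) (INF u\<in>{s..r}. \<phi> u) \<le> Lambda_regulator a \<phi> r"
proof -
  have "min (max (\<phi> s - a) 0) (INF u\<in>{s..r}. \<phi> u) \<le> \<phi> r" if "s \<in> {0..r}" for s
    using INF_Icc_le[OF assms(1), of s r] that by auto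
  then show ?thesis
    unfolding Lambda_regulator_def using assms(2) by (intro cSUP_upper bdd_aboveI2) auto
qed

lemma Lambda_regulator_le_later:
  fixes \<phi> :: "real \<Rightarrow> real"
  assumes bdd: "bdd_below (\<phi> ` {0..t'})" and "0 \<le> t" "t \<le> t'"
    and near: "\<And>u. u \<in> {t..t'} \<Longrightarrow> \<bar>\<phi> u - \<phi> t\<bar> \<le> B"
  shows "Lambda_regulator a \<phi> t \<le> Lambda_regulator a \<phi> t' + B"
  unfolding Lambda_regulator_def[of a \<phi> t]
proof (rule cSUP_least)
  have bdd_t: "bdd_below (\<phi> ` {0..t})"
    using bdd by (rule bdd_below_mono) (use \<open>t \<le> t'\<close> in auto)
  have "0 \<le> B" using near[of t] \<open>t \<le> t'\<close> by auto
  fix s assume s: "s \<in> {0..t}"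
  have "(INF u\<in>{s..t}. \<phi> u) - B \<le> (INF u\<in>{s..t'}. \<phi> u)"
  proof (rule cINF_greatest)
    fix u assume u: "u \<in> {s..t'}"
    have "(INF u\<in>{s..t}. \<phi> u) \<le> \<phi> (min u t)"
      using INF_Icc_le[OF bdd_t, of s "min u t"] s u by auto
    moreover have "\<phi> (min u t) - B \<le> \<phi> u"
      using near[of u] u \<open>0 \<le> B\<close> by (cases "u \<le> t") auto
    ultimately show "(INF u\<in>{s..t}. \<phi> u) - B \<le> \<phi> u" by linarith
  qed (use s \<open>t \<le> t'\<close> in auto)
  moreover have "min (max (\<phi> s - a) 0) (INF u\<in>{s..t'}. \<phi> u) \<le> Lambda_regulator a \<phi> t'"
    using Lambda_regulator_ge[OF bdd] s \<open>t \<le> t'\<close> by auto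
  ultimately show "min (max (\<phi> s - a) 0) (INF u\<in>{s..t}. \<phi> u) \<le> Lambda_regulator a \<phi> t' + B"
    using \<open>0 \<le> B\<close> by linarith
qed (use \<open>0 \<le> t\<close> in auto)

lemma Lambda_regulator_later_le:
  fixes \<phi> :: "real \<Rightarrow> real"
  assumes bdd: "bdd_below (\<phi> ` {0..t'})" and "0 \<le> t" "t \<le> t'"
    and near: "\<And>u. u \<in> {t..t'} \<Longrightarrow> \<bar>\<phi> u - \<phi> t\<bar> \<le> B"
  shows "Lambda_regulator a \<phi> t' \<le> Lambda_regulator a \<phi> t + B"
  unfolding Lambda_regulator_def[of a \<phi> t']
proof (rule cSUP_least)
  have bdd_t: "bdd_below (\<phi> ` {0..t})"
    using bdd by (rule bdd_below_mono) (use \<open>t \<le> t'\<close> in auto)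
  have "0 \<le> B" using near[of t] \<open>t \<le> t'\<close> by auto
  fix s assume s: "s \<in> {0..t'}"
  show "min (max (\<phi> s - a) 0) (INF u\<in>{s..t'}. \<phi> u) \<le> Lambda_regulator a \<phi> t + B"
  proof (cases "s \<le> t")
    case True
    have "(INF u\<in>{s..t'}. \<phi> u) \<le> (INF u\<in>{s..t}. \<phi> u)"
      by (rule cINF_greatest) (use True s \<open>t \<le> t'\<close> INF_Icc_le[OF bdd, of s] in auto)
    moreover have "min (max (\<phi> s - a) 0) (INF u\<in>{s..t}. \<phi> u) \<le> Lambda_regulator a \<phi> t"
      using Lambda_regulator_ge[OF bdd_t] s True by auto
    ultimately show ?thesis using \<open>0 \<le> B\<close> by linarith
  next
    case False
    \<comment> \<open>The term for \<open>s\<close> is within \<open>B\<close> of the term for \<open>s = t\<close> at time \<open>t\<close>.\<close>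
    have "(INF u\<in>{s..t'}. \<phi> u) \<le> \<phi> s"
      using INF_Icc_le[OF bdd, of s s] s by auto
    moreover have "\<bar>\<phi> s - \<phi> t\<bar> \<le> B"
      using near s False by auto
    moreover have "min (max (\<phi> t - a) 0) (\<phi> t) \<le> Lambda_regulator a \<phi> t"
      using Lambda_regulator_ge[OF bdd_t, of t a] \<open>0 \<le> t\<close> by simp
    ultimately show ?thesis by (auto simp: abs_le_iff)
  qed
qed (use \<open>0 \<le> t\<close> \<open>t \<le> t'\<close> in auto)

lemma abs_Lambda_regulator_diff_le:
  fixes \<phi> :: "real \<Rightarrow> real"
  assumes "bdd_below (\<phi> ` {0..t'})" and "0 \<le> t" "t \<le> t'"
    and "\<And>u. u \<in> {t..t'} \<Longrightarrow> \<bar>\<phi> u - \<phi> t\<bar> \<le> B"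
  shows "\<bar>Lambda_regulator a \<phi> t' - Lambda_regulator a \<phi> t\<bar> \<le> B"
proof -
  have "Lambda_regulator a \<phi> t \<le> Lambda_regulator a \<phi> t' + B"
    by (rule Lambda_regulator_le_later) (use assms in auto)
  moreover have "Lambda_regulator a \<phi> t' \<le> Lambda_regulator a \<phi> t + B"
    by (rule Lambda_regulator_later_le) (use assms in auto)
  ultimately show ?thesis by linarith
qed

lemma abs_Lambda_diff_le_if_near:
  fixes \<phi> :: "real \<Rightarrow> real"
  assumes "bdd_below (\<phi> ` {0..y})" and "0 \<le> x" "x \<le> y"
    and near: "\<And>u. u \<in> {x..y} \<Longrightarrow> \<bar>\<phi> u - c\<bar> \<le> B"
  shows "\<bar>Lambda a \<phi> y - Lambda a \<phi> x\<bar> \<le> 4 * B"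
proof -
  have near_x: "\<bar>\<phi> u - \<phi> x\<bar> \<le> 2 * B" if "u \<in> {x..y}" for u
    using near[OF that] near[of x] \<open>x \<le> y\<close> by auto
  have "\<bar>Lambda_regulator a \<phi> y - Lambda_regulator a \<phi> x\<bar> \<le> 2 * B"
    using abs_Lambda_regulator_diff_le[OF assms(1-3) near_x] .
  moreover have "\<bar>\<phi> y - \<phi> x\<bar> \<le> 2 * B"
    using near_x[of y] \<open>x \<le> y\<close> by auto
  ultimately show ?thesis
    unfolding Lambda_eq by linarith
qed

lemma Lambda_regulator_diff_witness:
  fixes \<phi> :: "real \<Rightarrow> real"
  assumes "bdd_below (\<phi> ` {0..t'})" and "0 \<le> t" "t \<le> t'" and "\<epsilon> > 0"
  obtains w where "w \<in> {t..t'}"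
    "\<bar>Lambda_regulator a \<phi> t' - Lambda_regulator a \<phi> t\<bar> < \<bar>\<phi> w - \<phi> t\<bar> + \<epsilon>"
proof -
  let ?d = "\<bar>Lambda_regulator a \<phi> t' - Lambda_regulator a \<phi> t\<bar>"
  have "\<not> (\<forall>w\<in>{t..t'}. \<bar>\<phi> w - \<phi> t\<bar> \<le> ?d - \<epsilon>)"
    using abs_Lambda_regulator_diff_le[OF assms(1-3), of "?d - \<epsilon>" a] \<open>\<epsilon> > 0\<close> by force
  then show thesis
    using that by (auto simp: not_le)
qed

lemma sum_abs_Lambda_diff_le:
  fixes \<phi> :: "real \<Rightarrow> real" and n :: nat
  assumes "bdd_below (\<phi> ` {0..T})"
    and "\<And>i. i < n \<Longrightarrow> 0 \<le> u i \<and> u i \<le> v i \<and> v i \<le> T" and "\<epsilon> > 0"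
  obtains w where "\<And>i. i < n \<Longrightarrow> w i \<in> {u i..v i}"
    "(\<Sum>i<n. \<bar>Lambda a \<phi> (v i) - Lambda a \<phi> (u i)\<bar>)
       \<le> (\<Sum>i<n. \<bar>\<phi> (v i) - \<phi> (u i)\<bar>) + (\<Sum>i<n. \<bar>\<phi> (w i) - \<phi> (u i)\<bar>) + \<epsilon>"
proof -
  define \<delta> where "\<delta> = \<epsilon> / (real n + 1)"
  have "\<delta> > 0" and "real n * \<delta> \<le> \<epsilon>"
    using \<open>\<epsilon> > 0\<close> by (auto simp: \<delta>_def field_simps)
  have "\<exists>w. i < n \<longrightarrow> w \<in> {u i..v i} \<and>
      \<bar>Lambda_regulator a \<phi> (v i) - Lambda_regulator a \<phi> (u i)\<bar> < \<bar>\<phi> w - \<phi> (u i)\<bar> + \<delta>" for i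
  proof (cases "i < n")
    case True
    have "bdd_below (\<phi> ` {0..v i})"
      using assms(1) by (rule bdd_below_mono) (use assms(2)[OF True] in auto)
    with Lambda_regulator_diff_witness[OF this _ _ \<open>\<delta> > 0\<close>] assms(2)[OF True] show ?thesis
      by metis
  qed simp
  then obtain w where w: "\<And>i. i < n \<Longrightarrow> w i \<in> {u i..v i} \<and>
      \<bar>Lambda_regulator a \<phi> (v i) - Lambda_regulator a \<phi> (u i)\<bar> < \<bar>\<phi> (w i) - \<phi> (u i)\<bar> + \<delta>"
    by metis
  have "(\<Sum>i<n. \<bar>Lambda a \<phi> (v i) - Lambda a \<phi> (u i)\<bar>)
      \<le> (\<Sum>i<n. \<bar>\<phi> (v i) - \<phi> (u i)\<bar> + \<bar>\<phi> (w i) - \<phi> (u i)\<bar> + \<delta>)"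
    by (intro sum_mono) (use w in \<open>force simp: Lambda_eq\<close>)
  also have "\<dots> \<le> (\<Sum>i<n. \<bar>\<phi> (v i) - \<phi> (u i)\<bar>) + (\<Sum>i<n. \<bar>\<phi> (w i) - \<phi> (u i)\<bar>) + \<epsilon>"
    using \<open>real n * \<delta> \<le> \<epsilon>\<close> by (simp add: sum.distrib)
  finally show thesis
    using that w by blast
qed

lemma bdd_below_image_compact_if_locally:
  fixes f :: "'a::topological_space \<Rightarrow> 'b::lattice"
  assumes "compact K" and local: "\<And>x. x \<in> K \<Longrightarrow> \<exists>c. \<forall>\<^sub>F y in nhds x. y \<in> K \<longrightarrow> c \<le> f y"
  shows "bdd_below (f ` K)"
proof -
  obtain c U where cU: "\<And>x. x \<in> K \<Longrightarrow> open (U x) \<and> x \<in> U x \<and> (\<forall>y\<in>U x. y \<in> K \<longrightarrow> c x \<le> f y)"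
    using local unfolding eventually_nhds by metis
  moreover have "K \<subseteq> (\<Union>x\<in>K. U x)"
    using cU by blast
  ultimately obtain C where C: "C \<subseteq> K" "finite C" "K \<subseteq> (\<Union>x\<in>C. U x)"
    using compactE_image[OF \<open>compact K\<close>, of K U] by metis
  have "bdd_below (f ` (U x \<inter> K))" if "x \<in> C" for x
    using cU[of x] C that by (intro bdd_belowI2[of _ "c x"]) auto
  then have "bdd_below (\<Union>x\<in>C. f ` (U x \<inter> K))"
    using \<open>finite C\<close> by simp
  moreover have "f ` K \<subseteq> (\<Union>x\<in>C. f ` (U x \<inter> K))"
    using C by blast
  ultimately show ?thesis
    by (rule bdd_below_mono)
qed

lemma cadlag_eventually_bounded_below:
  assumes "cadlag \<phi>" and "0 \<le> x"
  shows "\<exists>c. \<forall>\<^sub>F y in nhds x. 0 \<le> y \<longrightarrow> c \<le> \<phi> y"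
proof -
  have "(\<phi> \<longlongrightarrow> \<phi> x) (at_right x)"
    using assms by (simp add: cadlag_def continuous_within)
  then have right: "\<forall>\<^sub>F y in at_right x. \<phi> x - 1 < \<phi> y"
    by (rule order_tendstoD) simp
  obtain c where left: "\<forall>\<^sub>F y in at_left x. 0 \<le> y \<longrightarrow> c \<le> \<phi> y"
  proof (cases "x = 0")
    case True
    have "\<forall>\<^sub>F y in at_left x. y < 0"
      using True by (simp add: eventually_at_filter)
    then show ?thesis
      by (rule that[OF eventually_mono]) auto
  next
    case False
    then obtain l where "(\<phi> \<longlongrightarrow> l) (at_left x)"
      using assms unfolding cadlag_def by (metis le_less)
    then have "\<forall>\<^sub>F y in at_left x. l - 1 < \<phi> y"
      by (rule order_tendstoD) simp
    then show ?thesis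
      by (rule that[of "l - 1", OF eventually_mono]) auto
  qed
  have "\<forall>\<^sub>F y in nhds x. 0 \<le> y \<longrightarrow> min (\<phi> x - 1) c \<le> \<phi> y"
    unfolding eventually_nhds_conv_at eventually_at_split
    using left right by (auto elim: eventually_mono)
  then show ?thesis ..
qed

lemma cadlag_bdd_below: "cadlag \<phi> \<Longrightarrow> bdd_below (\<phi> ` {0..T})"
  by (rule bdd_below_image_compact_if_locally)
    (auto dest: cadlag_eventually_bounded_below elim!: eventually_mono)

lemma continuous_at_right_Lambda:
  assumes bdd: "\<And>T. bdd_below (\<phi> ` {0..T})" and "0 \<le> t" and "continuous (at_right t) \<phi>"
  shows "continuous (at_right t) (Lambda a \<phi>)"
  unfolding continuous_within tendsto_iff
proof (intro allI impI)
  fix e :: real assume "e > 0"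
  then have "\<forall>\<^sub>F y in at_right t. dist (\<phi> y) (\<phi> t) < e / 5"
    using assms(3) by (intro tendstoD) (simp_all add: continuous_within)
  then obtain b where "b > t" and b: "\<And>y. t < y \<Longrightarrow> y < b \<Longrightarrow> \<bar>\<phi> y - \<phi> t\<bar> < e / 5"
    by (auto simp: eventually_at_right_field dist_real_def)
  have "\<bar>Lambda a \<phi> y - Lambda a \<phi> t\<bar> \<le> 4 * (e / 5)" if "t < y" "y < b" for y
    by (rule abs_Lambda_diff_le_if_near[OF bdd \<open>0 \<le> t\<close>, where c = "\<phi> t"])
      (use that b \<open>e > 0\<close> in \<open>fastforce simp: le_less\<close>)+
  then show "\<forall>\<^sub>F y in at_right t. dist (Lambda a \<phi> y) (Lambda a \<phi> t) < e"
    unfolding eventually_at_right_field dist_real_def using \<open>b > t\<close> \<open>e > 0\<close> by force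
qed

lemma continuous_at_left_Lambda:
  assumes bdd: "\<And>T. bdd_below (\<phi> ` {0..T})" and "0 < t" and "continuous (at_left t) \<phi>"
  shows "continuous (at_left t) (Lambda a \<phi>)"
  unfolding continuous_within tendsto_iff
proof (intro allI impI)
  fix e :: real assume "e > 0"
  then have "\<forall>\<^sub>F y in at_left t. dist (\<phi> y) (\<phi> t) < e / 5"
    using assms(3) by (intro tendstoD) (simp_all add: continuous_within)
  then obtain b where "b < t" and b: "\<And>y. b < y \<Longrightarrow> y < t \<Longrightarrow> \<bar>\<phi> y - \<phi> t\<bar> < e / 5"
    by (auto simp: eventually_at_left_field dist_real_def)
  have "\<bar>Lambda a \<phi> t - Lambda a \<phi> y\<bar> \<le> 4 * (e / 5)" if "max b 0 < y" "y < t" for y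
    by (rule abs_Lambda_diff_le_if_near[OF bdd _ _, where c = "\<phi> t"])
      (use that b \<open>e > 0\<close> in \<open>fastforce simp: le_less\<close>)+
  then show "\<forall>\<^sub>F y in at_left t. dist (Lambda a \<phi> y) (Lambda a \<phi> t) < e"
    unfolding eventually_at_left_field dist_real_def
    using \<open>b < t\<close> \<open>0 < t\<close> \<open>e > 0\<close>
    by (intro exI[of _ "max b 0"]) (force simp: abs_minus_commute)
qed

lemma Lambda_has_left_limit:
  assumes bdd: "\<And>T. bdd_below (\<phi> ` {0..T})" and "0 < t" and "(\<phi> \<longlongrightarrow> l) (at_left t)"
  shows "\<exists>l'. (Lambda a \<phi> \<longlongrightarrow> l') (at_left t)"
proof -
  have "cauchy_filter (filtermap (Lambda a \<phi>) (at_left t))"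
    unfolding cauchy_filter_metric_filtermap
  proof (intro allI impI)
    fix e :: real assume "e > 0"
    then have "\<forall>\<^sub>F y in at_left t. dist (\<phi> y) l < e / 5"
      using assms(3) by (intro tendstoD) simp_all
    then obtain b where "b < t" and b: "\<And>y. b < y \<Longrightarrow> y < t \<Longrightarrow> \<bar>\<phi> y - l\<bar> < e / 5"
      by (auto simp: eventually_at_left_field dist_real_def)
    have close: "\<bar>Lambda a \<phi> y - Lambda a \<phi> x\<bar> \<le> 4 * (e / 5)"
      if "max b 0 < x" "x \<le> y" "y < t" for x y
      by (rule abs_Lambda_diff_le_if_near[OF bdd _ _, where c = l])
        (use that b[THEN less_imp_le] in force)+
    show "\<exists>P. eventually P (at_left t) \<and>
        (\<forall>x y. P x \<and> P y \<longrightarrow> dist (Lambda a \<phi> x) (Lambda a \<phi> y) < e)"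
    proof (intro exI conjI allI impI)
      show "\<forall>\<^sub>F y in at_left t. max b 0 < y \<and> y < t"
        unfolding eventually_at_left_field using \<open>b < t\<close> \<open>0 < t\<close>
        by (intro exI[of _ "max b 0"]) auto
      fix x y assume "(max b 0 < x \<and> x < t) \<and> (max b 0 < y \<and> y < t)"
      then show "dist (Lambda a \<phi> x) (Lambda a \<phi> y) < e"
        using close[of x y] close[of y x] \<open>e > 0\<close>
        by (cases "x \<le> y") (auto simp: dist_real_def abs_minus_commute)
    qed
  qed
  then have "convergent_filter (filtermap (Lambda a \<phi>) (at_left t))"
    by (rule cauchy_filter_convergent)
  then show ?thesis
    unfolding convergent_filter_iff filterlim_def by blast
qed

lemma continuous_on_Lambda:
  assumes bdd: "\<And>T. bdd_below (\<phi> ` {0..T})" and cont: "continuous_on {0..} \<phi>"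
  shows "continuous_on {0..} (Lambda a \<phi>)"
  unfolding continuous_on_def
proof
  fix t :: real assume t: "t \<in> {0..}"
  have cont_t: "continuous (at t within {0..}) \<phi>"
    using cont t by (simp add: continuous_on_eq_continuous_within)
  then have "continuous (at_right t) \<phi>"
    by (rule continuous_within_subset) (use t in auto)
  then have right: "(Lambda a \<phi> \<longlongrightarrow> Lambda a \<phi> t) (at_right t)"
    using continuous_at_right_Lambda[OF bdd] t by (simp add: continuous_within)
  show "(Lambda a \<phi> \<longlongrightarrow> Lambda a \<phi> t) (at t within {0..})"
  proof (cases "t = 0")
    case True
    then show ?thesis using right by (simp add: at_within_Ici_at_right)
  next
    case False
    then have "0 < t" using t by simp
    then have at_t: "at t within {0..} = at t"
      by (intro at_within_open_subset[of t "{0<..}"]) auto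
    then have "continuous (at_left t) \<phi>"
      using cont_t by (auto elim: continuous_within_subset)
    with right show ?thesis
      using continuous_at_left_Lambda[OF bdd \<open>0 < t\<close>] at_t
      by (simp add: filterlim_at_split continuous_within)
  qed
qed

lemma cadlag_Lambda:
  assumes "cadlag \<phi>"
  shows "cadlag (Lambda a \<phi>)"
proof -
  have bdd: "bdd_below (\<phi> ` {0..T})" for T
    using assms by (rule cadlag_bdd_below)
  show ?thesis
    using assms continuous_at_right_Lambda[OF bdd] Lambda_has_left_limit[OF bdd]
    unfolding cadlag_def by blast
qed

lemma interleave_partition:
  fixes f :: "real \<Rightarrow> real" and n :: nat
  assumes "\<And>i. i < n \<Longrightarrow> x i \<le> w i \<and> w i \<le> x (Suc i)"
  obtains y where "y 0 = x 0" "y (2 * n) = x n" "\<forall>j<2 * n. y j \<le> y (Suc j)"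
    "(\<Sum>j<2 * n. \<bar>f (y (Suc j)) - f (y j)\<bar>)
       = (\<Sum>i<n. \<bar>f (w i) - f (x i)\<bar>) + (\<Sum>i<n. \<bar>f (x (Suc i)) - f (w i)\<bar>)"
proof
  define y where "y j = (if even j then x (j div 2) else w (j div 2))" for j
  show "y 0 = x 0" and "y (2 * n) = x n"
    by (simp_all add: y_def)
  show "\<forall>j<2 * n. y j \<le> y (Suc j)"
    using assms by (auto simp: y_def elim!: oddE)
  have "(\<Sum>j<2 * n. \<bar>f (y (Suc j)) - f (y j)\<bar>) = (\<Sum>j<2 * n.
      if even j then \<bar>f (w (j div 2)) - f (x (j div 2))\<bar>
      else \<bar>f (x (Suc (j div 2))) - f (w (j div 2))\<bar>)"
    by (intro sum.cong) (auto simp: y_def elim!: oddE)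
  then show "(\<Sum>j<2 * n. \<bar>f (y (Suc j)) - f (y j)\<bar>)
      = (\<Sum>i<n. \<bar>f (w i) - f (x i)\<bar>) + (\<Sum>i<n. \<bar>f (x (Suc i)) - f (w i)\<bar>)"
    by (simp add: sum_split_even_odd)
qed

lemma bounded_variation_on_Lambda:
  fixes \<phi> :: "real \<Rightarrow> real"
  assumes bdd: "bdd_below (\<phi> ` {0..T})" and "bounded_variation_on 0 T \<phi>"
  shows "bounded_variation_on 0 T (Lambda a \<phi>)"
proof -
  obtain M where M: "\<And>n x. 0 \<le> x 0 \<and> x n \<le> T \<and> (\<forall>i<n. x i \<le> x (Suc i)) \<Longrightarrow>
      (\<Sum>i<n. \<bar>\<phi> (x (Suc i)) - \<phi> (x i)\<bar>) \<le> M"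
    using assms(2) unfolding bounded_variation_on_def by blast
  have "(\<Sum>i<n. \<bar>Lambda a \<phi> (x (Suc i)) - Lambda a \<phi> (x i)\<bar>) \<le> 2 * M + 1"
    if x: "0 \<le> x 0 \<and> x n \<le> T \<and> (\<forall>i<n. x i \<le> x (Suc i))" for n x
  proof -
    have x_mono: "x i \<le> x j" if "i \<le> j" "j \<le> n" for i j
      by (rule lift_Suc_mono_le_ivl[of "{..<n}"]) (use x that in auto)
    have x_in: "0 \<le> x i \<and> x i \<le> x (Suc i) \<and> x (Suc i) \<le> T" if "i < n" for i
      using x x_mono[of 0 i] x_mono[of "Suc i" n] that by auto
    obtain w where w: "\<And>i. i < n \<Longrightarrow> w i \<in> {x i..x (Suc i)}" and
      Lambda_le: "(\<Sum>i<n. \<bar>Lambda a \<phi> (x (Suc i)) - Lambda a \<phi> (x i)\<bar>)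
        \<le> (\<Sum>i<n. \<bar>\<phi> (x (Suc i)) - \<phi> (x i)\<bar>) + (\<Sum>i<n. \<bar>\<phi> (w i) - \<phi> (x i)\<bar>) + 1"
      by (rule sum_abs_Lambda_diff_le[OF bdd, of n x "\<lambda>i. x (Suc i)" 1])
        (use x_in in auto)
    obtain y where "y 0 = x 0" "y (2 * n) = x n" "\<forall>j<2 * n. y j \<le> y (Suc j)" and
      y_sum: "(\<Sum>j<2 * n. \<bar>\<phi> (y (Suc j)) - \<phi> (y j)\<bar>)
        = (\<Sum>i<n. \<bar>\<phi> (w i) - \<phi> (x i)\<bar>) + (\<Sum>i<n. \<bar>\<phi> (x (Suc i)) - \<phi> (w i)\<bar>)"
      by (rule interleave_partition[of n x w \<phi>]) (use w in auto)
    then have "(\<Sum>j<2 * n. \<bar>\<phi> (y (Suc j)) - \<phi> (y j)\<bar>) \<le> M"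
      using x by (intro M) auto
    moreover have "0 \<le> (\<Sum>i<n. \<bar>\<phi> (x (Suc i)) - \<phi> (w i)\<bar>)"
      by (rule sum_nonneg) simp
    moreover have "(\<Sum>i<n. \<bar>\<phi> (x (Suc i)) - \<phi> (x i)\<bar>) \<le> M"
      using x by (rule M)
    ultimately show ?thesis
      using Lambda_le y_sum by linarith
  qed
  then show ?thesis
    unfolding bounded_variation_on_def by blast
qed

definition nonoverlapping_intervals ::
    "real \<Rightarrow> real \<Rightarrow> nat \<Rightarrow> (nat \<Rightarrow> real) \<Rightarrow> (nat \<Rightarrow> real) \<Rightarrow> bool" where
  "nonoverlapping_intervals a b n u v \<longleftrightarrow>
     (\<forall>i<n. a \<le> u i \<and> u i \<le> v i \<and> v i \<le> b) \<and> (\<forall>i j. i < j \<and> j < n \<longrightarrow> v i \<le> u j)"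

lemma abs_continuous_on_iff:
  "abs_continuous_on a b f \<longleftrightarrow>
     (\<forall>\<epsilon>>0. \<exists>\<delta>>0. \<forall>n u v. nonoverlapping_intervals a b n u v \<and> (\<Sum>i<n. v i - u i) < \<delta> \<longrightarrow>
        (\<Sum>i<n. \<bar>f (v i) - f (u i)\<bar>) < \<epsilon>)"
  by (simp add: abs_continuous_on_def nonoverlapping_intervals_def)

lemma nonoverlapping_intervals_shrink:
  assumes "nonoverlapping_intervals a b n u v" and "\<And>i. i < n \<Longrightarrow> u i \<le> w i \<and> w i \<le> v i"
  shows "nonoverlapping_intervals a b n u w"
proof -
  have "w i \<le> u j" if "i < j" "j < n" for i j
  proof -
    have "w i \<le> v i"
      using assms(2) that by auto
    also have "v i \<le> u j"
      using assms(1) that unfolding nonoverlapping_intervals_def by blast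
    finally show ?thesis .
  qed
  then show ?thesis
    using assms unfolding nonoverlapping_intervals_def by (meson order_trans)
qed

lemma abs_continuous_on_imp_continuous_on:
  assumes "abs_continuous_on a b f"
  shows "continuous_on {a..b} f"
  unfolding continuous_on_iff
proof (intro ballI allI impI)
  fix x e :: real assume "x \<in> {a..b}" "0 < e"
  then obtain \<delta> where "\<delta> > 0" and \<delta>: "\<forall>n u v. nonoverlapping_intervals a b n u v \<and>
      (\<Sum>i<n. v i - u i) < \<delta> \<longrightarrow> (\<Sum>i<n. \<bar>f (v i) - f (u i)\<bar>) < e"
    using assms unfolding abs_continuous_on_iff by blast
  have "dist (f y) (f x) < e" if "y \<in> {a..b}" "dist y x < \<delta>" for y
  proof -
    have "nonoverlapping_intervals a b 1 (\<lambda>_. min x y) (\<lambda>_. max x y)"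
      using \<open>x \<in> {a..b}\<close> that(1) by (auto simp: nonoverlapping_intervals_def)
    moreover have "max x y - min x y < \<delta>"
      using that(2) by (simp add: dist_real_def)
    ultimately have "\<bar>f (max x y) - f (min x y)\<bar> < e"
      using \<delta> by force
    then show ?thesis
      by (cases "x \<le> y") (simp_all add: dist_real_def max_def min_def abs_minus_commute)
  qed
  with \<open>\<delta> > 0\<close> show "\<exists>d>0. \<forall>y\<in>{a..b}. dist y x < d \<longrightarrow> dist (f y) (f x) < e"
    by blast
qed

lemma abs_continuous_on_Lambda:
  fixes \<phi> :: "real \<Rightarrow> real"
  assumes ac: "abs_continuous_on 0 T \<phi>"
  shows "abs_continuous_on 0 T (Lambda a \<phi>)"
  unfolding abs_continuous_on_iff
proof (intro allI impI)
  fix e :: real assume "e > 0"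
  have "compact (\<phi> ` {0..T})"
    using abs_continuous_on_imp_continuous_on[OF ac] by (intro compact_continuous_image) auto
  then have bdd: "bdd_below (\<phi> ` {0..T})"
    by (intro bounded_imp_bdd_below compact_imp_bounded)
  have "e / 3 > 0"
    using \<open>e > 0\<close> by simp
  then obtain \<delta> where "\<delta> > 0" and \<delta>: "\<forall>n u v. nonoverlapping_intervals 0 T n u v \<and>
      (\<Sum>i<n. v i - u i) < \<delta> \<longrightarrow> (\<Sum>i<n. \<bar>\<phi> (v i) - \<phi> (u i)\<bar>) < e / 3"
    using ac unfolding abs_continuous_on_iff by blast
  have "(\<Sum>i<n. \<bar>Lambda a \<phi> (v i) - Lambda a \<phi> (u i)\<bar>) < e"
    if uv: "nonoverlapping_intervals 0 T n u v" "(\<Sum>i<n. v i - u i) < \<delta>" for n u v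
  proof -
    obtain w where w: "\<And>i. i < n \<Longrightarrow> w i \<in> {u i..v i}" and
      Lambda_le: "(\<Sum>i<n. \<bar>Lambda a \<phi> (v i) - Lambda a \<phi> (u i)\<bar>)
        \<le> (\<Sum>i<n. \<bar>\<phi> (v i) - \<phi> (u i)\<bar>) + (\<Sum>i<n. \<bar>\<phi> (w i) - \<phi> (u i)\<bar>) + e / 3"
      by (rule sum_abs_Lambda_diff_le[OF bdd, of n u v "e / 3"])
        (use uv(1) \<open>e > 0\<close> in \<open>auto simp: nonoverlapping_intervals_def\<close>)
    have "(\<Sum>i<n. \<bar>\<phi> (v i) - \<phi> (u i)\<bar>) < e / 3"
      using \<delta> uv by blast
    moreover have "(\<Sum>i<n. \<bar>\<phi> (w i) - \<phi> (u i)\<bar>) < e / 3"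
    proof (rule \<delta>[rule_format, OF conjI])
      show "nonoverlapping_intervals 0 T n u w"
        by (rule nonoverlapping_intervals_shrink[OF uv(1)]) (use w in auto)
      have "(\<Sum>i<n. w i - u i) \<le> (\<Sum>i<n. v i - u i)"
        by (rule sum_mono) (use w in auto)
      then show "(\<Sum>i<n. w i - u i) < \<delta>"
        using uv(2) by linarith
    qed
    ultimately show ?thesis
      using Lambda_le by linarith
  qed
  with \<open>\<delta> > 0\<close> show "\<exists>\<delta>>0. \<forall>n u v. nonoverlapping_intervals 0 T n u v \<and> (\<Sum>i<n. v i - u i) < \<delta> \<longrightarrow>
      (\<Sum>i<n. \<bar>Lambda a \<phi> (v i) - Lambda a \<phi> (u i)\<bar>) < e"
    by blast
qed

theorem proposition1p3:
  fixes a :: real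
  assumes "a > 0"
  shows "(\<forall>\<phi>\<in>D_space. Lambda a \<phi> \<in> D_space) \<and>
         (\<forall>\<phi>\<in>C_space. Lambda a \<phi> \<in> C_space) \<and>
         (\<forall>\<phi>\<in>BV_space. Lambda a \<phi> \<in> BV_space) \<and>
         (\<forall>\<phi>\<in>AC_space. Lambda a \<phi> \<in> AC_space)"
proof (intro conjI ballI)
  fix \<phi> assume "\<phi> \<in> D_space"
  then show "Lambda a \<phi> \<in> D_space"
    by (simp add: D_space_def cadlag_Lambda)
next
  fix \<phi> assume "\<phi> \<in> C_space"
  then show "Lambda a \<phi> \<in> C_space"
    by (simp add: C_space_def cadlag_Lambda continuous_on_Lambda cadlag_bdd_below)
next
  fix \<phi> assume "\<phi> \<in> BV_space"
  then show "Lambda a \<phi> \<in> BV_space"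
    by (simp add: BV_space_def cadlag_Lambda bounded_variation_on_Lambda cadlag_bdd_below)
next
  fix \<phi> assume "\<phi> \<in> AC_space"
  then show "Lambda a \<phi> \<in> AC_space"
    by (simp add: AC_space_def abs_continuous_on_Lambda)
qed

end
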